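(* Let $k$ be an algebraically closed field, let $n\ge 1$ and $1\le g\le n$. Let $K$ be the quiver with vertices $0,1,\dots,n$ and arrows $\beta_x: x\to x+1$ for $0\le x\le g-1$ and $\alpha_x: x+1\to x$ for $g\le x\le n$, where vertex indices are read modulo $n+1$ (so $\alpha_n:0\to n$). For integers $p\le q$ let $V_{(p,q)}\in\operatorname{rep}K$ be the representation defined in the context, and for $V\in\operatorname{rep}K$ let $\overline V\in\operatorname{rep}K$ be the representation defined in the context (dualize, then relabel vertices by the permutation $G$). Let $p,q\in\mathbb Z$ with $p\le q$, and let $p',q'\in\mathbb Z$ satisfy $p'\equiv Gq \pmod{n+1}$, $q'\equiv Gp\pmod{n+1}$ and $q'-p'=q-p$. Then there is an isomorphism of representations $\overline{V_{(p,q)}}\cong V_{(p',q')}$.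
   Context: Representations of $K$ are finite-dimensional: a $k$-vector space $V(x)$ at each vertex and a linear map $V(\gamma):V(x)\to V(y)$ for each arrow $\gamma:x\to y$; morphisms are families of linear maps commuting with all arrow maps; $\operatorname{rep}K$ denotes this category. Interval representations: for $0\le p\le n$ and $q\ge p$, let $E$ have basis $e_p,\dots,e_q$ and set $V_{(p,q)}(x)=\bigoplus_{p\le i\le q,\ i\equiv x \ (\mathrm{mod}\ n+1)} k e_i$. For $0\le x\le g-1$, $V_{(p,q)}(\beta_x)$ sends $e_i$ (with $i\equiv x$) to $e_{i+1}$ if $i<q$ and to $0$ if $i=q$. For $g\le x\le n$, $V_{(p,q)}(\alpha_x)$ sends $e_i$ (with $i\equiv x+1$) to $e_{i-1}$ if $i>p$ and to $0$ if $i=p$. For arbitrary $p\in\mathbb Z$ and $q\ge p$, set $V_{(p,q)}:=V_{(p_0,q+p_0-p)}$ where $p_0\in\{0,\dots,n\}$, $p_0\equiv p \pmod{n+1}$. The permutation $G$ of $\{0,\dots,n\}$: $Gx=g-x$ for $0\le x\le g$ and $Gx=n+g+1-x$ for $g+1\le x\le n$; it is extended to $\mathbb Z$ by $Gz:=G(z\bmod (n+1))$ with $z\bmod(n+1)\in\{0,\dots,n\}$. For every arrow $\gamma:x\to y$ of $K$ there is an arrow $G\gamma: Gy\to Gx$ of $K$. For $V\in\operatorname{rep}K$ define $\overline V\in \operatorname{rep} K$ by $\overline V(x)=V(Gx)^*$ (dual space) for each vertex $x$ and, for each arrow $\gamma:x\to y$ of $K$, $\overline V(G\gamma)=V(\gamma)^*:V(y)^*\to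 V(x)^*$ (the dual map), which is a map $\overline V(Gy)\to\overline V(Gx)$. *)

theory Defs
  imports "HOL-Computational_Algebra.Polynomial" "Jordan_Normal_Form.Matrix"
begin

text \<open>
  The quiver K (parameters n, g with 1 \<le> g \<le> n) has vertices 0..n and arrows indexed
  by a \<in> {0..n}: arrow a is beta_a : a \<rightarrow> a+1 if a < g, and alpha_a : a+1 \<rightarrow> a
  (vertex a+1 read mod n+1) if g \<le> a \<le> n.
\<close>

definition vsucc :: "nat \<Rightarrow> nat \<Rightarrow> nat" where
  "vsucc n x = (x + 1) mod (n + 1)"

definition arr_src :: "nat \<Rightarrow> nat \<Rightarrow> nat \<Rightarrow> nat" where
  "arr_src n g a = (if a < g then a else vsucc n a)"

definition arr_tgt :: "nat \<Rightarrow> nat \<Rightarrow> nat \<Rightarrow> nat" where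
  "arr_tgt n g a = (if a < g then vsucc n a else a)"

definition Gv :: "nat \<Rightarrow> nat \<Rightarrow> nat \<Rightarrow> nat" where
  "Gv n g x = (if x \<le> g then g - x else n + g + 1 - x)"

definition Gz :: "nat \<Rightarrow> nat \<Rightarrow> int \<Rightarrow> int" where
  "Gz n g z = int (Gv n g (nat (z mod int (n + 1))))"

text \<open>The arrow G(gamma) : G y \<rightarrow> G x for gamma : x \<rightarrow> y (see lemmas below).\<close>

definition Garr :: "nat \<Rightarrow> nat \<Rightarrow> nat \<Rightarrow> nat" where
  "Garr n g a = (if a < g then g - 1 - a else n + g - a)"

text \<open>
  A finite-dimensional representation over the field 'a, in coordinates: at vertex x the
  space 'a^(rdim V x) and for arrow a the matrix rmap V a (of size
  rdim V (arr_tgt a) \<times> rdim V (arr_src a)), acting on column vectors.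
\<close>

record 'a qrep =
  rdim :: "nat \<Rightarrow> nat"
  rmap :: "nat \<Rightarrow> 'a mat"

definition is_rep :: "nat \<Rightarrow> nat \<Rightarrow> 'a::field qrep \<Rightarrow> bool" where
  "is_rep n g V \<longleftrightarrow> (\<forall>a\<le>n. rmap V a \<in> carrier_mat (rdim V (arr_tgt n g a)) (rdim V (arr_src n g a)))"

definition rep_iso :: "nat \<Rightarrow> nat \<Rightarrow> 'a::field qrep \<Rightarrow> 'a qrep \<Rightarrow> bool" where
  "rep_iso n g V W \<longleftrightarrow>
     (\<exists>\<phi> :: nat \<Rightarrow> 'a mat.
        (\<forall>x\<le>n. \<phi> x \<in> carrier_mat (rdim W x) (rdim V x) \<and> invertible_mat (\<phi> x)) \<and>
        (\<forall>a\<le>n. \<phi> (arr_tgt n g a) * rmap V a = rmap W a * \<phi> (arr_src n g a)))"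

text \<open>
  Dual representation: overline V (x) = V(G x)^*, and overline V (G gamma) = V(gamma)^*.
  With respect to dual bases, the dual map has the transposed matrix. Since Garr is an
  involution on arrows, the arrow b = G(gamma) carries the transpose of V(Garr b).
\<close>

definition dual_rep :: "nat \<Rightarrow> nat \<Rightarrow> 'a::field qrep \<Rightarrow> 'a qrep" where
  "dual_rep n g V = \<lparr> rdim = (\<lambda>x. rdim V (Gv n g x)),
                      rmap = (\<lambda>b. transpose_mat (rmap V (Garr n g b))) \<rparr>"

text \<open>
  For 0 \<le> p \<le> n (p0) and q0 \<ge> p0, the basis of V(x) is the list of
  indices i \<in> [p0, q0] with i \<equiv> x mod (n+1), in increasing order (basis vector e_i).
  beta_x sends e_i to e_(i+1) (or 0 if i = q0), alpha_x sends e_i to e_(i-1) (or 0 if i = p0).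
\<close>

definition ibasis :: "nat \<Rightarrow> int \<Rightarrow> int \<Rightarrow> nat \<Rightarrow> int list" where
  "ibasis n p0 q0 x = filter (\<lambda>i. i mod int (n + 1) = int x) [p0..q0]"

definition interval_rep0 :: "nat \<Rightarrow> nat \<Rightarrow> int \<Rightarrow> int \<Rightarrow> 'a::field qrep" where
  "interval_rep0 n g p0 q0 = \<lparr>
     rdim = (\<lambda>x. length (ibasis n p0 q0 x)),
     rmap = (\<lambda>a. let s = ibasis n p0 q0 (arr_src n g a); t = ibasis n p0 q0 (arr_tgt n g a) in
              mat (length t) (length s)
                (\<lambda>(r, c). if (if a < g then t ! r = s ! c + 1 else t ! r = s ! c - 1)
                          then 1 else 0)) \<rparr>"

definition interval_rep :: "nat \<Rightarrow> nat \<Rightarrow> int \<Rightarrow> int \<Rightarrow> 'a::field qrep" where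
  "interval_rep n g p q =
     (let p0 = p mod int (n + 1) in interval_rep0 n g p0 (q + p0 - p))"

end

theory Submission
  imports Defs
begin

text \<open>
  Dualising V(p,q) reverses every arrow and relabels vertex x by G x, whereas reflecting the
  index interval, i \<mapsto> C - i, also turns the shifts i \<mapsto> i \<plusminus> 1 of the arrow maps into shifts in
  the opposite direction. Choosing C = p' + q (after normalising p and p') maps [p, q] onto
  [p', q'], and C \<equiv> g mod (n+1) makes the reflection carry the residue class of G x to that of
  x. The basis permutation e_i^* \<mapsto> e_(C-i) is therefore an isomorphism, and in coordinates
  all matrices involved are incidence matrices of relations between index lists.
\<close>

definition incidence_mat :: "'b list \<Rightarrow> 'c list \<Rightarrow> ('b \<Rightarrow> 'c \<Rightarrow> bool) \<Rightarrow> 'a::field mat" where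
  "incidence_mat T S R = mat (length T) (length S) (\<lambda>(r, c). if R (T ! r) (S ! c) then 1 else 0)"

lemma sum_indicator_unique:
  fixes m :: nat
  assumes "\<And>k k'. k < m \<Longrightarrow> k' < m \<Longrightarrow> P k \<Longrightarrow> P k' \<Longrightarrow> k = k'"
  shows "(\<Sum>k\<in>{0..<m}. if P k then 1 else 0 :: 'a::{comm_monoid_add, zero_neq_one}) =
         (if \<exists>k<m. P k then 1 else 0)"
proof (cases "\<exists>k<m. P k")
  case True
  then obtain k0 where k0: "k0 < m" "P k0" by blast
  have "(\<Sum>k\<in>{0..<m}. if P k then 1 else 0 :: 'a) = (\<Sum>k\<in>{0..<m}. if k = k0 then 1 else 0)"
    by (rule sum.cong) (use assms k0 in auto)
  also have "\<dots> = 1" using k0 by (subst sum.delta) auto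
  finally show ?thesis using True by simp
qed (auto intro!: sum.neutral)

lemma incidence_mat_mult:
  assumes "distinct T"
    and "\<And>u s t t'. R2 u t \<Longrightarrow> R1 t s \<Longrightarrow> R2 u t' \<Longrightarrow> R1 t' s \<Longrightarrow> t = t'"
  shows "(incidence_mat U T R2 * incidence_mat T S R1 :: 'a::field mat) =
         incidence_mat U S (\<lambda>u s. \<exists>t\<in>set T. R2 u t \<and> R1 t s)"
proof (rule eq_matI)
  fix r c
  assume "r < dim_row (incidence_mat U S (\<lambda>u s. \<exists>t\<in>set T. R2 u t \<and> R1 t s) :: 'a mat)"
    and "c < dim_col (incidence_mat U S (\<lambda>u s. \<exists>t\<in>set T. R2 u t \<and> R1 t s) :: 'a mat)"
  then have r: "r < length U" and c: "c < length S" by (auto simp: incidence_mat_def)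
  have "(incidence_mat U T R2 * incidence_mat T S R1 :: 'a mat) $$ (r, c) =
        (\<Sum>k\<in>{0..<length T}. if R2 (U ! r) (T ! k) \<and> R1 (T ! k) (S ! c) then 1 else 0)"
    using r c by (auto simp: incidence_mat_def scalar_prod_def intro!: sum.cong)
  also have "\<dots> = (if \<exists>k<length T. R2 (U ! r) (T ! k) \<and> R1 (T ! k) (S ! c) then 1 else 0)"
    by (rule sum_indicator_unique) (use assms in \<open>metis nth_eq_iff_index_eq\<close>)
  also have "\<dots> = (incidence_mat U S (\<lambda>u s. \<exists>t\<in>set T. R2 u t \<and> R1 t s) :: 'a mat) $$ (r, c)"
    using r c by (auto simp: incidence_mat_def in_set_conv_nth) (metis nth_mem)
  finally show "(incidence_mat U T R2 * incidence_mat T S R1 :: 'a mat) $$ (r, c) =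
      (incidence_mat U S (\<lambda>u s. \<exists>t\<in>set T. R2 u t \<and> R1 t s) :: 'a mat) $$ (r, c)" .
qed (auto simp: incidence_mat_def)

lemma incidence_mat_cong:
  assumes "\<And>u s. u \<in> set U \<Longrightarrow> s \<in> set S \<Longrightarrow> R u s = R' u s"
  shows "incidence_mat U S R = incidence_mat U S R'"
  unfolding incidence_mat_def by (rule eq_matI) (auto simp: assms)

lemma transpose_incidence_mat:
  "transpose_mat (incidence_mat U S R) = incidence_mat S U (\<lambda>s u. R u s)"
  unfolding incidence_mat_def by (rule eq_matI) auto

lemma incidence_mat_eq_one_mat: "distinct T \<Longrightarrow> incidence_mat T T (=) = 1\<^sub>m (length T)"
  unfolding incidence_mat_def by (rule eq_matI) (auto simp: nth_eq_iff_index_eq)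

lemma incidence_mat_bij_invertible:
  assumes "distinct S" and "distinct T"
    and mem_iff: "\<And>i. i \<in> set S \<longleftrightarrow> \<sigma> i \<in> set T"
    and "bij \<sigma>"
  shows "(incidence_mat T S (\<lambda>j i. j = \<sigma> i) :: 'a::field mat) \<in> carrier_mat (length T) (length S)"
    and "invertible_mat (incidence_mat T S (\<lambda>j i. j = \<sigma> i) :: 'a mat)"
proof -
  have inj: "\<sigma> i = \<sigma> i' \<Longrightarrow> i = i'" for i i' using \<open>bij \<sigma>\<close> by (simp add: bij_def inj_eq)
  have set_T: "set T = \<sigma> ` set S"
  proof (intro equalityI subsetI)
    fix j assume "j \<in> set T"
    moreover obtain i where "j = \<sigma> i" using \<open>bij \<sigma>\<close> by (metis bij_pointE)
    ultimately show "j \<in> \<sigma> ` set S" using mem_iff by blast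
  qed (use mem_iff in blast)
  have "inj_on \<sigma> (set S)" using inj by (meson inj_onI)
  then have len: "length T = length S"
    using set_T distinct_card[OF \<open>distinct S\<close>] distinct_card[OF \<open>distinct T\<close>] card_image by metis
  define \<psi> :: "'a mat" where "\<psi> = incidence_mat S T (\<lambda>i j. j = \<sigma> i)"
  have "incidence_mat T S (\<lambda>j i. j = \<sigma> i) * \<psi> =
        incidence_mat T T (\<lambda>j j'. \<exists>i\<in>set S. j = \<sigma> i \<and> j' = \<sigma> i)"
    unfolding \<psi>_def by (rule incidence_mat_mult[OF \<open>distinct S\<close>]) (auto dest: inj)
  also have "\<dots> = incidence_mat T T (=)"
    by (rule incidence_mat_cong) (use set_T in auto)
  finally have right_inv: "incidence_mat T S (\<lambda>j i. j = \<sigma> i) * \<psi> = 1\<^sub>m (length T)"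
    using incidence_mat_eq_one_mat[OF \<open>distinct T\<close>] by simp
  have "\<psi> * incidence_mat T S (\<lambda>j i. j = \<sigma> i) =
        incidence_mat S S (\<lambda>i i'. \<exists>j\<in>set T. j = \<sigma> i \<and> j = \<sigma> i')"
    unfolding \<psi>_def by (rule incidence_mat_mult[OF \<open>distinct T\<close>]) auto
  also have "\<dots> = incidence_mat S S (=)"
    by (rule incidence_mat_cong) (use mem_iff inj in auto)
  finally have left_inv: "\<psi> * incidence_mat T S (\<lambda>j i. j = \<sigma> i) = 1\<^sub>m (length S)"
    using incidence_mat_eq_one_mat[OF \<open>distinct S\<close>] by simp
  show "(incidence_mat T S (\<lambda>j i. j = \<sigma> i) :: 'a mat) \<in> carrier_mat (length T) (length S)"
    by (simp add: incidence_mat_def)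
  show "invertible_mat (incidence_mat T S (\<lambda>j i. j = \<sigma> i) :: 'a mat)"
    unfolding invertible_mat_def inverts_mat_def
    using right_inv left_inv len by (auto simp: \<psi>_def incidence_mat_def)
qed

lemma reflection_conj_shift:
  fixes C :: int
  assumes "distinct St" and "distinct Ts"
    and tgt_iff: "\<And>i. i \<in> set St \<longleftrightarrow> C - i \<in> set Tt"
    and src_iff: "\<And>i. i \<in> set Ss \<longleftrightarrow> C - i \<in> set Ts"
    and R_def: "R = (\<lambda>j i::int. if b then j = i + 1 else j = i - 1)"
  shows "(incidence_mat Tt St (\<lambda>j i. j = C - i) :: 'a::field mat) * incidence_mat St Ss (\<lambda>v u. R u v)
       = incidence_mat Tt Ts R * incidence_mat Ts Ss (\<lambda>j i. j = C - i)"
proof -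
  have "(incidence_mat Tt St (\<lambda>j i. j = C - i) :: 'a mat) * incidence_mat St Ss (\<lambda>v u. R u v)
      = incidence_mat Tt Ss (\<lambda>j u. \<exists>v\<in>set St. j = C - v \<and> R u v)"
    by (rule incidence_mat_mult[OF \<open>distinct St\<close>]) auto
  also have "\<dots> = incidence_mat Tt Ss (\<lambda>j u. \<exists>k\<in>set Ts. R j k \<and> k = C - u)"
  proof (rule incidence_mat_cong)
    fix j u assume "j \<in> set Tt" and "u \<in> set Ss"
    then have "C - j \<in> set St" and "C - u \<in> set Ts"
      using tgt_iff[of "C - j"] src_iff[of u] by simp_all
    moreover have "R u (C - j) \<longleftrightarrow> R j (C - u)" unfolding R_def by auto
    ultimately show "(\<exists>v\<in>set St. j = C - v \<and> R u v) \<longleftrightarrow> (\<exists>k\<in>set Ts. R j k \<and> k = C - u)"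
      by force
  qed
  also have "\<dots> = incidence_mat Tt Ts R * incidence_mat Ts Ss (\<lambda>j i. j = C - i)"
    by (rule incidence_mat_mult[OF \<open>distinct Ts\<close>, symmetric]) auto
  finally show ?thesis .
qed

lemma set_ibasis: "set (ibasis n a b x) = {i. a \<le> i \<and> i \<le> b \<and> i mod int (n + 1) = int x}"
  unfolding ibasis_def by auto

lemma distinct_ibasis: "distinct (ibasis n a b x)"
  unfolding ibasis_def by simp

lemma rdim_interval_rep0: "rdim (interval_rep0 n g a b) x = length (ibasis n a b x)"
  unfolding interval_rep0_def by simp

lemma rmap_interval_rep0:
  "rmap (interval_rep0 n g a b :: 'a::field qrep) c =
   incidence_mat (ibasis n a b (arr_tgt n g c)) (ibasis n a b (arr_src n g c))
     (\<lambda>j i. if c < g then j = i + 1 else j = i - 1)"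
  unfolding interval_rep0_def incidence_mat_def Let_def by simp

lemma Gv_le: "x \<le> n \<Longrightarrow> g \<le> n \<Longrightarrow> Gv n g x \<le> n"
  unfolding Gv_def by auto

lemma Gv_cong: "x \<le> n \<Longrightarrow> g \<le> n \<Longrightarrow> int (n + 1) dvd int (Gv n g x) - (int g - int x)"
  unfolding Gv_def by (cases "x \<le> g") (auto simp: of_nat_diff)

lemma Gz_cong: "g \<le> n \<Longrightarrow> int (n + 1) dvd Gz n g z - (int g - z)"
proof -
  assume "g \<le> n"
  define x where "x = nat (z mod int (n + 1))"
  have "0 \<le> z mod int (n + 1)" "z mod int (n + 1) < int (n + 1)" by simp_all
  then have x: "int x = z mod int (n + 1)" "x \<le> n" unfolding x_def by linarith+
  have "int (n + 1) dvd z - int x" using x(1) by (simp add: mod_eq_dvd_iff[symmetric])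
  with Gv_cong[OF x(2) \<open>g \<le> n\<close>]
  have "int (n + 1) dvd (int (Gv n g x) - (int g - int x)) + (z - int x)" by (rule dvd_add)
  then show ?thesis unfolding Gz_def x_def[symmetric] by (simp add: algebra_simps)
qed

lemma arr_Garr:
  assumes "a \<le> n" "1 \<le> g" "g \<le> n"
  shows "arr_tgt n g (Garr n g a) = Gv n g (arr_src n g a)"
    and "arr_src n g (Garr n g a) = Gv n g (arr_tgt n g a)"
    and "Garr n g a < g \<longleftrightarrow> a < g"
    and "arr_src n g a \<le> n" "arr_tgt n g a \<le> n"
  using assms unfolding arr_tgt_def arr_src_def Garr_def Gv_def vsucc_def
  by (auto simp: mod_Suc)

lemma dvd_diff_iff_right: "(N::'a::comm_ring_1) dvd D \<Longrightarrow> N dvd b \<longleftrightarrow> N dvd D - b"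
  by (metis dvd_add_right_iff dvd_minus_iff diff_conv_add_uminus)

lemma reflection_mem_ibasis:
  assumes "g \<le> n" "x \<le> n"
    and C_cong: "int (n + 1) dvd C - int g"
    and C_eq: "C = P0 + q0" and len_eq: "Q0 - P0 = q0 - p0"
  shows "i \<in> set (ibasis n p0 q0 (Gv n g x)) \<longleftrightarrow> C - i \<in> set (ibasis n P0 Q0 x)"
proof -
  let ?N = "int (n + 1)" and ?G = "int (Gv n g x)"
  have "?N dvd (C - int g) - (?G - (int g - int x))"
    using C_cong Gv_cong[OF \<open>x \<le> n\<close> \<open>g \<le> n\<close>] by (rule dvd_diff)
  then have "?N dvd i - ?G \<longleftrightarrow> ?N dvd ((C - int g) - (?G - (int g - int x))) - (i - ?G)"
    by (rule dvd_diff_iff_right)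
  also have "((C - int g) - (?G - (int g - int x))) - (i - ?G) = (C - i) - int x" by simp
  finally have "?N dvd i - ?G \<longleftrightarrow> ?N dvd (C - i) - int x" .
  moreover have "i mod ?N = ?G \<longleftrightarrow> ?N dvd i - ?G" "(C - i) mod ?N = int x \<longleftrightarrow> ?N dvd (C - i) - int x"
    using Gv_le[OF \<open>x \<le> n\<close> \<open>g \<le> n\<close>] \<open>x \<le> n\<close> by (simp_all add: mod_eq_dvd_iff[symmetric])
  moreover have "p0 \<le> i \<and> i \<le> q0 \<longleftrightarrow> P0 \<le> C - i \<and> C - i \<le> Q0"
    using C_eq len_eq by linarith
  ultimately show ?thesis unfolding set_ibasis mem_Collect_eq by blast
qed

lemma dual_interval_rep0_iso:
  assumes "1 \<le> g" "g \<le> n"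
    and C_cong: "int (n + 1) dvd C - int g"
    and C_eq: "C = P0 + q0" and len_eq: "Q0 - P0 = q0 - p0"
  shows "rep_iso n g (dual_rep n g (interval_rep0 n g p0 q0 :: 'a::field qrep))
                     (interval_rep0 n g P0 Q0)"
proof -
  note mem_iff = reflection_mem_ibasis[OF \<open>g \<le> n\<close> _ C_cong C_eq len_eq]
  define \<phi> :: "nat \<Rightarrow> 'a mat" where
    "\<phi> x = incidence_mat (ibasis n P0 Q0 x) (ibasis n p0 q0 (Gv n g x)) (\<lambda>j i. j = C - i)" for x
  have bij: "bij (\<lambda>i::int. C - i)"
    by (rule bij_betwI'[where X = UNIV]) (auto intro: exI[of _ "C - _"])
  have "\<phi> x \<in> carrier_mat (rdim (interval_rep0 n g P0 Q0 :: 'a qrep) x)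
                 (rdim (dual_rep n g (interval_rep0 n g p0 q0 :: 'a qrep)) x) \<and> invertible_mat (\<phi> x)"
    if "x \<le> n" for x
    unfolding \<phi>_def dual_rep_def rdim_interval_rep0 qrep.simps
    using incidence_mat_bij_invertible[OF distinct_ibasis distinct_ibasis mem_iff[OF that] bij]
    by blast
  moreover have "\<phi> (arr_tgt n g a) * rmap (dual_rep n g (interval_rep0 n g p0 q0 :: 'a qrep)) a
       = rmap (interval_rep0 n g P0 Q0 :: 'a qrep) a * \<phi> (arr_src n g a)" if "a \<le> n" for a
  proof -
    note arr = arr_Garr[OF \<open>a \<le> n\<close> \<open>1 \<le> g\<close> \<open>g \<le> n\<close>]
    have rmap_dual: "rmap (dual_rep n g (interval_rep0 n g p0 q0 :: 'a qrep)) a =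
          incidence_mat (ibasis n p0 q0 (Gv n g (arr_tgt n g a))) (ibasis n p0 q0 (Gv n g (arr_src n g a)))
            (\<lambda>v u. (\<lambda>j i::int. if a < g then j = i + 1 else j = i - 1) u v)"
      unfolding dual_rep_def by (simp add: rmap_interval_rep0 transpose_incidence_mat arr)
    show ?thesis
      unfolding rmap_dual rmap_interval_rep0 \<phi>_def
      by (rule reflection_conj_shift[OF distinct_ibasis distinct_ibasis mem_iff[OF arr(5)]
          mem_iff[OF arr(4)] refl])
  qed
  ultimately show ?thesis unfolding rep_iso_def by blast
qed

theorem mainTheorem1:
  fixes n g :: nat and p q p' q' :: int
  assumes "1 \<le> n" and "1 \<le> g" and "g \<le> n"
    and "p \<le> q"
    and "p' mod int (n + 1) = Gz n g q mod int (n + 1)"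
    and "q' mod int (n + 1) = Gz n g p mod int (n + 1)"
    and "q' - p' = q - p"
  shows "rep_iso n g (dual_rep n g (interval_rep n g p q :: 'a::alg_closed_field qrep))
                     (interval_rep n g p' q')"
proof -
  define N where "N = int (n + 1)"
  define p0 P0 where "p0 = p mod N" and "P0 = p' mod N"
  have "N dvd P0 - p'" "N dvd p0 - p"
    by (simp_all add: p0_def P0_def mod_eq_dvd_iff[symmetric])
  moreover have "N dvd p' - Gz n g q" using assms(5) by (simp add: N_def mod_eq_dvd_iff)
  moreover have "N dvd Gz n g q - (int g - q)" using Gz_cong[OF \<open>g \<le> n\<close>] by (simp add: N_def)
  ultimately have "N dvd (P0 - p') + (p' - Gz n g q) + (Gz n g q - (int g - q)) + (p0 - p)"
    by (intro dvd_add)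
  then have "N dvd (P0 + (q + p0 - p)) - int g" by (simp add: algebra_simps)
  then have "rep_iso n g (dual_rep n g (interval_rep0 n g p0 (q + p0 - p) :: 'a qrep))
                         (interval_rep0 n g P0 (q' + P0 - p'))"
    using assms(7) by (intro dual_interval_rep0_iso[OF \<open>1 \<le> g\<close> \<open>g \<le> n\<close>]) (simp_all add: N_def)
  then show ?thesis unfolding interval_rep_def Let_def p0_def P0_def N_def .
qed

end
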